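(* Let $r\geq0$ be an integer and $T\in\overline{\mathrm{Sub}}(X,1)$ with $T\subset B(1,r)$. Let $T_1,T_2\in\mathcal{R}_{r+1}$ with $T_1\cap T_2=T$. Let $(\Delta_1,\tau_1),(\Delta_2,\tau_2)$ be $R_N$-core graphs and $v_i\in V(\Delta_i)$. If there are based occurrences $f_i\colon(T_i,1)\to(\Delta_i,v_i)$ ($i=1,2$), then the connected component $\Gamma$ of $\Delta_1\times_{R_N}\Delta_2$ containing $(v_1,v_2)$ is $R_N$-graph isomorphic to $T$ (via $x\mapsto(f_1(x),f_2(x))$); in particular $\Gamma$ is contractible.
   Context: $N\ge2$, $F_N$ free with free basis $A$, $X$ its Cayley graph (a tree with vertex set $F_N$, unit edge lengths, metric $d_X$), $B(1,r)=\{x\in X:d_X(1,x)\le r\}$, $R_N=F_N\backslash X$ the rose, $q\colon X\to R_N$ the projection. An $R_N$-graph is a graph with a graph morphism $\tau$ to $R_N$ (edges labeled by $A$ and oriented); $R_N$-graph morphisms commute with the maps to $R_N$. An $R_N$-core graph is a finite $R_N$-graph with $\tau$ locally injective and no vertices of degree $0$ or $1$. Subtrees of $X$ are $R_N$-graphs via $q$. $\overline{\mathrm{Sub}}(X,1)$: finite subtrees of $X$ containing $1$ (including $\{1\}$). For $r\ge1$, $\mathcal{R}_r$: finite subtrees $T'\ni1$ in which $1$ has degree $\geq2$ and every degree-one vertex lies at distance exactly $r$ from $1$. A based occurrence $(T',1)\to(\Delta,v)$ of a finite subtree $T'$ is an $R_N$-graph morphism sending $1\mapsto v$ and preserving the degree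 of every vertex of $T'$ of degree $\ge2$. The fiber product $\Delta_1\times_{R_N}\Delta_2$ has vertex set $V(\Delta_1)\times V(\Delta_2)$ and, for each pair of edges $e_1,e_2$ with the same label $a$ (oriented compatibly), an edge labeled $a$ from $(o(e_1),o(e_2))$ to $(t(e_1),t(e_2))$. *)

theory Defs
  imports Main
begin

text \<open>A graph with a morphism to the rose R_N: every edge is oriented and
labelled by a basis element, represented by an index i < N.\<close>

record ('v, 'e) rgraph =
  verts :: "'v set"
  edges :: "'e set"
  src   :: "'e \<Rightarrow> 'v"
  tgt   :: "'e \<Rightarrow> 'v"
  lab   :: "'e \<Rightarrow> nat"

definition wf_rgraph :: "nat \<Rightarrow> ('v, 'e) rgraph \<Rightarrow> bool" where
  "wf_rgraph N G \<longleftrightarrow> (\<forall>e\<in>edges G. src G e \<in> verts G \<and> tgt G e \<in> verts G \<and> lab G e < N)"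

text \<open>Degree: number of half-edges at v (a loop counts twice).\<close>
definition deg :: "('v, 'e) rgraph \<Rightarrow> 'v \<Rightarrow> nat" where
  "deg G v = card {e\<in>edges G. src G e = v} + card {e\<in>edges G. tgt G e = v}"

definition locally_injective :: "('v, 'e) rgraph \<Rightarrow> bool" where
  "locally_injective G \<longleftrightarrow>
     (\<forall>v\<in>verts G. inj_on (lab G) {e\<in>edges G. src G e = v}
                 \<and> inj_on (lab G) {e\<in>edges G. tgt G e = v})"

definition core_graph :: "nat \<Rightarrow> ('v, 'e) rgraph \<Rightarrow> bool" where
  "core_graph N G \<longleftrightarrow> wf_rgraph N G \<and> finite (verts G) \<and> finite (edges G)
     \<and> locally_injective G \<and> (\<forall>v\<in>verts G. deg G v \<ge> 2)"

definition rmorph :: "('v, 'e) rgraph \<Rightarrow> ('w, 'f) rgraph \<Rightarrow> ('v \<Rightarrow> 'w) \<Rightarrow> ('e \<Rightarrow> 'f) \<Rightarrow> bool" where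
  "rmorph G H fv fe \<longleftrightarrow>
     fv ` verts G \<subseteq> verts H \<and> fe ` edges G \<subseteq> edges H \<and>
     (\<forall>e\<in>edges G. src H (fe e) = fv (src G e) \<and> tgt H (fe e) = fv (tgt G e)
                   \<and> lab H (fe e) = lab G e)"

definition riso :: "('v, 'e) rgraph \<Rightarrow> ('w, 'f) rgraph \<Rightarrow> ('v \<Rightarrow> 'w) \<Rightarrow> ('e \<Rightarrow> 'f) \<Rightarrow> bool" where
  "riso G H fv fe \<longleftrightarrow> rmorph G H fv fe \<and> bij_betw fv (verts G) (verts H)
     \<and> bij_betw fe (edges G) (edges H)"

definition adj :: "('v, 'e) rgraph \<Rightarrow> 'v \<Rightarrow> 'v \<Rightarrow> bool" where
  "adj G u v \<longleftrightarrow> (\<exists>e\<in>edges G. (src G e = u \<and> tgt G e = v) \<or> (src G e = v \<and> tgt G e = u))"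

definition reach :: "('v, 'e) rgraph \<Rightarrow> 'v \<Rightarrow> 'v \<Rightarrow> bool" where
  "reach G = (adj G)\<^sup>*\<^sup>*"

definition connected_graph :: "('v, 'e) rgraph \<Rightarrow> bool" where
  "connected_graph G \<longleftrightarrow> verts G \<noteq> {} \<and> (\<forall>u\<in>verts G. \<forall>v\<in>verts G. reach G u v)"

definition component :: "('v, 'e) rgraph \<Rightarrow> 'v \<Rightarrow> ('v, 'e) rgraph" where
  "component G v = G\<lparr> verts := {u\<in>verts G. reach G v u},
                      edges := {e\<in>edges G. reach G v (src G e)} \<rparr>"

text \<open>Contractible finite graph = finite tree: connected with |E| = |V| - 1.\<close>
definition contractible_graph :: "('v, 'e) rgraph \<Rightarrow> bool" where
  "contractible_graph G \<longleftrightarrow> connected_graph G \<and> finite (verts G) \<and> finite (edges G)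
     \<and> card (edges G) + 1 = card (verts G)"

definition fiber_product :: "('v, 'e) rgraph \<Rightarrow> ('w, 'f) rgraph \<Rightarrow> ('v \<times> 'w, 'e \<times> 'f) rgraph" where
  "fiber_product G H = \<lparr> verts = verts G \<times> verts H,
     edges = {(e1, e2). e1 \<in> edges G \<and> e2 \<in> edges H \<and> lab G e1 = lab H e2},
     src = (\<lambda>(e1, e2). (src G e1, src H e2)),
     tgt = (\<lambda>(e1, e2). (tgt G e1, tgt H e2)),
     lab = (\<lambda>(e1, e2). lab G e1) \<rparr>"

text \<open>Letters: (i, True) = a_i, (i, False) = a_i^{-1}, i < N. Elements of F_N
are reduced words; the identity 1 is the empty word.\<close>

type_synonym letter = "nat \<times> bool"
type_synonym word = "letter list"

definition inv_letter :: "letter \<Rightarrow> letter" where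
  "inv_letter x = (fst x, \<not> snd x)"

definition reduced :: "nat \<Rightarrow> word \<Rightarrow> bool" where
  "reduced N w \<longleftrightarrow> (\<forall>x\<in>set w. fst x < N) \<and>
     (\<forall>i. Suc i < length w \<longrightarrow> w ! Suc i \<noteq> inv_letter (w ! i))"

definition mult_letter :: "word \<Rightarrow> letter \<Rightarrow> word" where
  "mult_letter w x = (if w \<noteq> [] \<and> last w = inv_letter x then butlast w else w @ [x])"

text \<open>The subgraph of the Cayley graph X induced on a vertex set S; edges are
g --a_i--> g a_i.\<close>
definition cayley_sub :: "nat \<Rightarrow> word set \<Rightarrow> (word, word \<times> nat) rgraph" where
  "cayley_sub N S = \<lparr> verts = S,
     edges = {(w, i). w \<in> S \<and> i < N \<and> mult_letter w (i, True) \<in> S},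
     src = fst,
     tgt = (\<lambda>(w, i). mult_letter w (i, True)),
     lab = snd \<rparr>"

definition cayley_tree :: "nat \<Rightarrow> (word, word \<times> nat) rgraph" where
  "cayley_tree N = cayley_sub N {w. reduced N w}"

text \<open>Sub-bar(X,1): finite subtrees of X containing 1 (identified with their
vertex sets; a connected subgraph of a tree is the induced one).\<close>
definition SubX1 :: "nat \<Rightarrow> word set \<Rightarrow> bool" where
  "SubX1 N T \<longleftrightarrow> finite T \<and> [] \<in> T \<and> T \<subseteq> {w. reduced N w}
     \<and> connected_graph (cayley_sub N T)"

text \<open>Ball B(1,r); d_X(1,w) = length of the reduced word w.\<close>
definition ball :: "nat \<Rightarrow> nat \<Rightarrow> word set" where
  "ball N r = {w. reduced N w \<and> length w \<le> r}"

definition calR :: "nat \<Rightarrow> nat \<Rightarrow> word set \<Rightarrow> bool" where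
  "calR N r T \<longleftrightarrow> SubX1 N T \<and> deg (cayley_sub N T) [] \<ge> 2
     \<and> (\<forall>w\<in>T. deg (cayley_sub N T) w = 1 \<longrightarrow> length w = r)"

definition based_occurrence ::
  "nat \<Rightarrow> word set \<Rightarrow> ('v, 'e) rgraph \<Rightarrow> 'v \<Rightarrow> (word \<Rightarrow> 'v) \<Rightarrow> (word \<times> nat \<Rightarrow> 'e) \<Rightarrow> bool" where
  "based_occurrence N T D v fv fe \<longleftrightarrow>
     rmorph (cayley_sub N T) D fv fe \<and> fv [] = v \<and>
     (\<forall>x\<in>T. deg (cayley_sub N T) x \<ge> 2 \<longrightarrow> deg D (fv x) = deg (cayley_sub N T) x)"

end

theory Submission
  imports Defs
begin

text \<open>
  Put \<open>F x = (f\<^sub>1 x, f\<^sub>2 x)\<close> and \<open>G e = (g\<^sub>1 e, g\<^sub>2 e)\<close>.  Every vertex x of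
  T lies in B(1,r), so it has degree at least 2 in both \<open>T\<^sub>i \<in> \<R>\<^sub>r\<^sub>+\<^sub>1\<close>; a based occurrence
  preserves that degree, and since a morphism out of a Cayley subgraph is injective
  on the edges at a vertex, the occurrence maps the edges of \<open>T\<^sub>i\<close> at x bijectively
  onto the edges of \<open>\<Delta>\<^sub>i\<close> at \<open>f\<^sub>i x\<close>.  Pairing the two, the edges of the fibre product at
  F x are exactly the images of the edges of \<open>T = T\<^sub>1 \<inter> T\<^sub>2\<close> at x: the morphism
  (F, G) from T is locally bijective.
\<close>


lemma reduced_no_cancel_suffix: "reduced N (xs @ [a, b]) \<Longrightarrow> b \<noteq> inv_letter a"
  unfolding reduced_def by (auto dest!: spec[of _ "length xs"] simp: nth_append)

lemma mult_letter_pos: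
  "mult_letter w (i, True) = (if w \<noteq> [] \<and> last w = (i, False) then butlast w else w @ [(i, True)])"
  by (simp add: mult_letter_def inv_letter_def)

lemma mult_letter_inj:
  assumes "reduced N y" "reduced N y'" "mult_letter y c = mult_letter y' c"
  shows "y = y'"
proof (rule ccontr)
  assume "y \<noteq> y'"
  have cancel: "\<not> reduced N z" if "z \<noteq> []" "last z = inv_letter c" "butlast z = z' @ [c]" for z z'
  proof -
    have "z = z' @ [c, inv_letter c]"
      using that by (metis append_butlast_last_id append.assoc append_Cons append_Nil)
    then show ?thesis using reduced_no_cancel_suffix[of N z' c "inv_letter c"] by auto
  qed
  show False
    using assms \<open>y \<noteq> y'\<close> cancel[of y y'] cancel[of y' y]
    by (auto simp: mult_letter_def split: if_splits) (metis append_butlast_last_id)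
qed

lemma cayley_sub_verts [simp]: "verts (cayley_sub N S) = S"
  by (simp add: cayley_sub_def)
lemma cayley_sub_edges:
  "t \<in> edges (cayley_sub N S) \<longleftrightarrow> fst t \<in> S \<and> snd t < N \<and> mult_letter (fst t) (snd t, True) \<in> S"
  by (cases t) (simp add: cayley_sub_def)
lemma cayley_sub_src [simp]: "src (cayley_sub N S) = fst"
  by (simp add: cayley_sub_def)
lemma cayley_sub_tgt [simp]: "tgt (cayley_sub N S) t = mult_letter (fst t) (snd t, True)"
  by (simp add: cayley_sub_def split_beta)
lemma cayley_sub_lab [simp]: "lab (cayley_sub N S) = snd"
  by (simp add: cayley_sub_def)

lemma finite_cayley_sub_edges: "finite S \<Longrightarrow> finite (edges (cayley_sub N S))"
  by (rule finite_subset[of _ "S \<times> {..<N}"]) (auto simp: cayley_sub_edges)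

lemma cayley_sub_neighbour:
  assumes "adj (cayley_sub N S) a b"
  shows "b = butlast a \<or> (\<exists>c. b = a @ [c])"
proof -
  have step: "mult_letter w c = butlast w \<or> mult_letter w c = w @ [c]" for w c
    by (simp add: mult_letter_def)
  obtain c where "b = mult_letter a c \<or> a = mult_letter b c"
    using assms by (auto simp: adj_def)
  then show ?thesis
  proof
    assume "b = mult_letter a c"
    then show ?thesis using step[of a c] by blast
  next
    assume "a = mult_letter b c"
    then have "a = butlast b \<or> a = b @ [c]" using step by simp
    then show ?thesis by (metis append_butlast_last_id butlast.simps(1) butlast_snoc)
  qed
qed

lemma SubX1_reach_root: "SubX1 N T \<Longrightarrow> x \<in> T \<Longrightarrow> reach (cayley_sub N T) [] x"
  by (simp add: SubX1_def connected_graph_def)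

lemma SubX1_prefix_closed:
  assumes "SubX1 N T" "x \<in> T"
  shows "take k x \<in> T"
proof -
  have "(adj (cayley_sub N T))\<^sup>*\<^sup>* [] x"
    using SubX1_reach_root[OF assms] by (simp add: reach_def)
  then have "\<forall>k. take k x \<in> T"
  proof (induction rule: rtranclp_induct)
    case base
    then show ?case using assms(1) by (simp add: SubX1_def)
  next
    case (step a b)
    have "b \<in> T" using step(2) by (auto simp: adj_def cayley_sub_edges)
    show ?case
    proof
      fix k
      from cayley_sub_neighbour[OF step(2)] show "take k b \<in> T"
      proof
        assume "b = butlast a"
        then show ?thesis using step(3) by (simp add: butlast_conv_take)
      next
        assume "\<exists>c. b = a @ [c]"
        then show ?thesis using step(3) \<open>b \<in> T\<close> by (cases "k \<le> length a") auto
      qed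
    qed
  qed
  then show ?thesis ..
qed

text \<open>Each word \<open>x \<noteq> 1\<close> is joined to its parent \<open>butlast x\<close> by a unique edge, and each
  edge has a unique endpoint farther from 1 (its child).  The two maps are inverse
  bijections, which gives the tree count of a finite subtree.\<close>
definition parent_edge :: "word \<Rightarrow> word \<times> nat" where
  "parent_edge x = (if snd (last x) then (butlast x, fst (last x)) else (x, fst (last x)))"

definition edge_child :: "word \<times> nat \<Rightarrow> word" where
  "edge_child t = (if fst t \<noteq> [] \<and> last (fst t) = (snd t, False) then fst t else fst t @ [(snd t, True)])"

lemma edge_child_parent_edge:
  assumes "reduced N x" "x \<noteq> []"
  shows "edge_child (parent_edge x) = x"
proof (cases "last x")
  case (Pair i b)
  have x: "x = butlast x @ [(i, b)]" using assms(2) Pair by (metis append_butlast_last_id)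
  show ?thesis
  proof (cases b)
    case True
    have "\<not> (butlast x \<noteq> [] \<and> last (butlast x) = (i, False))"
    proof
      assume "butlast x \<noteq> [] \<and> last (butlast x) = (i, False)"
      then have "butlast x = butlast (butlast x) @ [(i, False)]"
        by (metis append_butlast_last_id)
      then have "x = butlast (butlast x) @ [(i, False), (i, True)]"
        using x True by (metis append.assoc append_Cons append_Nil)
      then show False
        using reduced_no_cancel_suffix[of N "butlast (butlast x)" "(i, False)" "(i, True)"] assms(1)
        by (simp add: inv_letter_def)
    qed
    then have "edge_child (parent_edge x) = butlast x @ [(i, True)]"
      using True Pair by (simp add: parent_edge_def edge_child_def)
    then show ?thesis using x True by metis
  next
    case False
    then show ?thesis using Pair assms(2) by (simp add: parent_edge_def edge_child_def)
  qed
qed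

lemma parent_edge_edge_child: "parent_edge (edge_child t) = t"
  by (cases t) (simp add: parent_edge_def edge_child_def)

lemma cayley_sub_edge_child:
  "t \<in> edges (cayley_sub N S) \<longleftrightarrow>
     edge_child t \<in> S \<and> butlast (edge_child t) \<in> S \<and> snd t < N"
proof -
  have "{fst t, mult_letter (fst t) (snd t, True)} = {edge_child t, butlast (edge_child t)}"
    by (auto simp: edge_child_def mult_letter_pos)
  then show ?thesis by (auto simp: cayley_sub_edges doubleton_eq_iff)
qed

lemma edge_child_nonempty: "edge_child t \<noteq> []"
  by (simp add: edge_child_def)

lemma cayley_sub_tree_count:
  assumes "SubX1 N T"
  shows "card (edges (cayley_sub N T)) + 1 = card T"
proof -
  have fin: "finite T" and root: "[] \<in> T" and red: "T \<subseteq> {w. reduced N w}"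
    using assms by (auto simp: SubX1_def)
  have "bij_betw parent_edge (T - {[]}) (edges (cayley_sub N T))"
  proof (rule bij_betw_byWitness[where f' = edge_child])
    show "\<forall>x\<in>T - {[]}. edge_child (parent_edge x) = x"
      using red edge_child_parent_edge by blast
    show "\<forall>t\<in>edges (cayley_sub N T). parent_edge (edge_child t) = t"
      by (simp add: parent_edge_edge_child)
    show "edge_child ` edges (cayley_sub N T) \<subseteq> T - {[]}"
      by (auto simp: cayley_sub_edge_child edge_child_nonempty)
    show "parent_edge ` (T - {[]}) \<subseteq> edges (cayley_sub N T)"
    proof
      fix t assume "t \<in> parent_edge ` (T - {[]})"
      then obtain x where x: "x \<in> T" "x \<noteq> []" "t = parent_edge x" by auto
      have "edge_child t = x" using edge_child_parent_edge red x by blast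
      moreover have "butlast x \<in> T"
        using SubX1_prefix_closed[OF assms x(1)] by (simp add: butlast_conv_take)
      moreover have "snd t < N" using red x by (auto simp: reduced_def parent_edge_def)
      ultimately show "t \<in> edges (cayley_sub N T)"
        using x(1) by (simp add: cayley_sub_edge_child)
    qed
  qed
  then have "card (edges (cayley_sub N T)) = card (T - {[]})"
    by (simp add: bij_betw_same_card)
  also have "\<dots> + 1 = card T"
    using fin root by (simp add: card_Diff_singleton) (metis Suc_pred card_gt_0_iff empty_iff)
  finally show ?thesis .
qed

lemma component_verts [simp]: "verts (component G v) = {u \<in> verts G. reach G v u}"
  by (simp add: component_def)
lemma component_edges [simp]: "edges (component G v) = {e \<in> edges G. reach G v (src G e)}"
  by (simp add: component_def)
lemma component_src [simp]: "src (component G v) = src G"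
  by (simp add: component_def)
lemma component_tgt [simp]: "tgt (component G v) = tgt G"
  by (simp add: component_def)
lemma component_lab [simp]: "lab (component G v) = lab G"
  by (simp add: component_def)

lemma rmorph_edge:
  assumes "rmorph G H fv fe" "e \<in> edges G"
  shows "fe e \<in> edges H" "src H (fe e) = fv (src G e)" "tgt H (fe e) = fv (tgt G e)"
    "lab H (fe e) = lab G e"
  using assms by (auto simp: rmorph_def)

lemma rmorph_vert: "rmorph G H fv fe \<Longrightarrow> x \<in> verts G \<Longrightarrow> fv x \<in> verts H"
  by (auto simp: rmorph_def)

lemma reach_rmorph:
  assumes "rmorph G H fv fe" "reach G a b"
  shows "reach H (fv a) (fv b)"
proof -
  have "(adj G)\<^sup>*\<^sup>* a b" using assms(2) by (simp add: reach_def)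
  then show ?thesis
  proof (induction rule: rtranclp_induct)
    case base
    then show ?case by (simp add: reach_def)
  next
    case (step y z)
    have "adj H (fv y) (fv z)"
      using step(2) rmorph_edge[OF assms(1)] unfolding adj_def by metis
    with step(3) show ?case by (simp add: reach_def)
  qed
qed

definition out_edges :: "('v, 'e) rgraph \<Rightarrow> 'v \<Rightarrow> 'e set" where
  "out_edges G v = {e \<in> edges G. src G e = v}"

definition in_edges :: "('v, 'e) rgraph \<Rightarrow> 'v \<Rightarrow> 'e set" where
  "in_edges G v = {e \<in> edges G. tgt G e = v}"

text \<open>A morphism is locally bijective if, at every vertex, it maps the outgoing
  and the incoming edges bijectively onto those at the image vertex; these are the
  graph-theoretic coverings onto their image.\<close>
definition locally_bijective ::
  "('v, 'e) rgraph \<Rightarrow> ('w, 'f) rgraph \<Rightarrow> ('v \<Rightarrow> 'w) \<Rightarrow> ('e \<Rightarrow> 'f) \<Rightarrow> bool" where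
  "locally_bijective C P F G \<longleftrightarrow>
     (\<forall>x\<in>verts C. bij_betw G (out_edges C x) (out_edges P (F x))
                 \<and> bij_betw G (in_edges C x) (in_edges P (F x)))"

text \<open>The image of a connected graph under a locally bijective morphism is a whole
  connected component: locally, every edge at an image vertex is hit.\<close>
lemma locally_bijective_image_component:
  assumes mor: "rmorph C P F G" and lb: "locally_bijective C P F G"
    and ends: "\<forall>t\<in>edges C. src C t \<in> verts C \<and> tgt C t \<in> verts C"
    and root: "x0 \<in> verts C" and conn: "\<forall>x\<in>verts C. reach C x0 x"
  shows "verts (component P (F x0)) = F ` verts C"
    and "edges (component P (F x0)) = G ` edges C"
proof -
  have out: "out_edges P (F x) = G ` out_edges C x"
   and inc: "in_edges P (F x) = G ` in_edges C x" if "x \<in> verts C" for x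
    using lb that by (auto simp: locally_bijective_def bij_betw_def)
  have closure: "u \<in> F ` verts C" if "reach P (F x0) u" for u
  proof -
    have "(adj P)\<^sup>*\<^sup>* (F x0) u" using that by (simp add: reach_def)
    then show ?thesis
    proof (induction rule: rtranclp_induct)
      case base
      then show ?case using root by simp
    next
      case (step y z)
      then obtain x where x: "x \<in> verts C" "y = F x" by auto
      from step(2) obtain e where "e \<in> edges P"
        "(src P e = y \<and> tgt P e = z) \<or> (src P e = z \<and> tgt P e = y)"
        unfolding adj_def by blast
      then consider (fwd) "e \<in> out_edges P (F x)" "z = tgt P e"
        | (bwd) "e \<in> in_edges P (F x)" "z = src P e"
        using x by (auto simp: out_edges_def in_edges_def)
      then show ?case
      proof cases
        case fwd
        then obtain t where "t \<in> out_edges C x" "e = G t" using out[OF x(1)] by auto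
        then show ?thesis using fwd ends rmorph_edge[OF mor] by (auto simp: out_edges_def)
      next
        case bwd
        then obtain t where "t \<in> in_edges C x" "e = G t" using inc[OF x(1)] by auto
        then show ?thesis using bwd ends rmorph_edge[OF mor] by (auto simp: in_edges_def)
      qed
    qed
  qed
  have reach_image: "reach P (F x0) (F x)" if "x \<in> verts C" for x
    using reach_rmorph[OF mor] conn that by blast
  show "verts (component P (F x0)) = F ` verts C"
    using closure reach_image rmorph_vert[OF mor] by auto
  show "edges (component P (F x0)) = G ` edges C"
  proof
    show "edges (component P (F x0)) \<subseteq> G ` edges C"
    proof
      fix e assume "e \<in> edges (component P (F x0))"
      then have e: "e \<in> edges P" "reach P (F x0) (src P e)" by auto
      then obtain x where "x \<in> verts C" "src P e = F x" using closure by blast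
      then show "e \<in> G ` edges C"
        using out e(1) by (fastforce simp: out_edges_def)
    qed
    show "G ` edges C \<subseteq> edges (component P (F x0))"
      using reach_image ends rmorph_edge[OF mor] by auto
  qed
qed

text \<open>The endpoint map is a parameter, so one lemma serves sources and targets.\<close>
lemma fiber_card_by_endpoint:
  fixes endC :: "'e \<Rightarrow> 'v" and endP :: "'f \<Rightarrow> 'w"
  assumes star: "\<forall>x\<in>verts C. bij_betw G {t \<in> edges C. endC t = x} {e \<in> edges P. endP e = F x}"
    and ends: "\<forall>t\<in>edges C. endC t \<in> verts C" and t0: "t0 \<in> edges C"
  shows "card {t \<in> edges C. G t = G t0} = card {y \<in> verts C. F y = F (endC t0)}"
proof (rule bij_betw_same_card[of endC], unfold bij_betw_def, intro conjI)
  have maps: "G t \<in> edges P \<and> endP (G t) = F (endC t)" if "t \<in> edges C" for t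
    using star ends that by (auto simp: bij_betw_def)
  show "inj_on endC {t \<in> edges C. G t = G t0}"
  proof (rule inj_onI)
    fix t t' assume "t \<in> {t \<in> edges C. G t = G t0}" "t' \<in> {t \<in> edges C. G t = G t0}"
      and "endC t = endC t'"
    then show "t = t'"
      using star ends by (auto simp: bij_betw_def dest!: inj_onD[where x = t and y = t'])
  qed
  show "endC ` {t \<in> edges C. G t = G t0} = {y \<in> verts C. F y = F (endC t0)}"
  proof
    show "endC ` {t \<in> edges C. G t = G t0} \<subseteq> {y \<in> verts C. F y = F (endC t0)}"
    proof
      fix y assume "y \<in> endC ` {t \<in> edges C. G t = G t0}"
      then obtain t where t: "t \<in> edges C" "G t = G t0" "y = endC t" by auto
      then show "y \<in> {y \<in> verts C. F y = F (endC t0)}"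
        using maps[OF t(1)] maps[OF t0] ends by auto
    qed
    show "{y \<in> verts C. F y = F (endC t0)} \<subseteq> endC ` {t \<in> edges C. G t = G t0}"
    proof
      fix y assume y: "y \<in> {y \<in> verts C. F y = F (endC t0)}"
      then have "G t0 \<in> {e \<in> edges P. endP e = F y}" using maps t0 by auto
      moreover have "{e \<in> edges P. endP e = F y} = G ` {t \<in> edges C. endC t = y}"
        using star y by (auto simp: bij_betw_def)
      ultimately obtain t where "t \<in> edges C" "endC t = y" "G t = G t0"
        by (metis (mono_tags, lifting) imageE mem_Collect_eq)
      then show "y \<in> endC ` {t \<in> edges C. G t = G t0}" by blast
    qed
  qed
qed

lemma locally_bijective_edge_fiber:
  assumes "locally_bijective C P F G"
    and "\<forall>t\<in>edges C. src C t \<in> verts C \<and> tgt C t \<in> verts C" and "t \<in> edges C"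
  shows "card {t' \<in> edges C. G t' = G t} = card {y \<in> verts C. F y = F (src C t)}"
    and "card {t' \<in> edges C. G t' = G t} = card {y \<in> verts C. F y = F (tgt C t)}"
  using fiber_card_by_endpoint[of C G "src C" P "src P" F] fiber_card_by_endpoint[of C G "tgt C" P "tgt P" F]
    assms by (auto simp: locally_bijective_def out_edges_def in_edges_def)

text \<open>Over a connected graph, all vertex fibres of a locally bijective morphism have
  the same size: adjacent vertices have fibres of the size of the edge fibre.\<close>
lemma locally_bijective_fiber_const:
  assumes lb: "locally_bijective C P F G"
    and ends: "\<forall>t\<in>edges C. src C t \<in> verts C \<and> tgt C t \<in> verts C"
    and "reach C x0 x"
  shows "card {y \<in> verts C. F y = F x} = card {y \<in> verts C. F y = F x0}"
proof -
  have "(adj C)\<^sup>*\<^sup>* x0 x" using assms(3) by (simp add: reach_def)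
  then show ?thesis
  proof (induction rule: rtranclp_induct)
    case base
    then show ?case by simp
  next
    case (step a b)
    from step(2) obtain t where t: "t \<in> edges C"
      "(src C t = a \<and> tgt C t = b) \<or> (src C t = b \<and> tgt C t = a)"
      unfolding adj_def by blast
    have "card {y \<in> verts C. F y = F (src C t)} = card {y \<in> verts C. F y = F (tgt C t)}"
      using locally_bijective_edge_fiber[OF lb ends t(1)] by simp
    then show ?case using step(3) t(2) by auto
  qed
qed

lemma card_uniform_fibers:
  assumes "finite S" "\<And>x. x \<in> S \<Longrightarrow> card {y \<in> S. g y = g x} = k"
  shows "card S = k * card (g ` S)"
proof -
  have "card S = (\<Sum>u\<in>g ` S. \<Sum>x\<in>{x \<in> S. g x = u}. 1::nat)"
    using sum.group[OF assms(1) finite_imageI[OF assms(1)], where g = g and h = "\<lambda>_. 1::nat"]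
    by simp
  also have "\<dots> = (\<Sum>u\<in>g ` S. k)"
    using assms(2) by (intro sum.cong) auto
  finally show ?thesis by simp
qed

text \<open>If all fibres have size k, then
  |V| = k |F V| and |E| = k |G E|; with |E| + 1 = |V| this forces k = 1.\<close>
theorem locally_bijective_tree_iso:
  assumes mor: "rmorph C P F G" and lb: "locally_bijective C P F G"
    and ends: "\<forall>t\<in>edges C. src C t \<in> verts C \<and> tgt C t \<in> verts C"
    and tree: "contractible_graph C" and root: "x0 \<in> verts C"
  shows "riso C (component P (F x0)) F G \<and> contractible_graph (component P (F x0))"
proof -
  let ?\<Gamma> = "component P (F x0)"
  define k where "k = card {y \<in> verts C. F y = F x0}"
  have conn: "\<forall>x\<in>verts C. \<forall>y\<in>verts C. reach C x y"
    and finV: "finite (verts C)" and finE: "finite (edges C)"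
    and count: "card (edges C) + 1 = card (verts C)"
    using tree by (auto simp: contractible_graph_def connected_graph_def)
  have V\<Gamma>: "verts ?\<Gamma> = F ` verts C" and E\<Gamma>: "edges ?\<Gamma> = G ` edges C"
    using locally_bijective_image_component[OF mor lb ends root] conn root by auto
  have fib: "card {y \<in> verts C. F y = F x} = k" if "x \<in> verts C" for x
    using locally_bijective_fiber_const[OF lb ends] conn root that unfolding k_def by blast
  have "card (verts C) = k * card (F ` verts C)"
    using card_uniform_fibers[OF finV] fib by blast
  moreover have "card (edges C) = k * card (G ` edges C)"
  proof (rule card_uniform_fibers[OF finE])
    fix t assume "t \<in> edges C"
    then show "card {t' \<in> edges C. G t' = G t} = k"
      using locally_bijective_edge_fiber(1)[OF lb ends] fib ends by simp
  qed
  ultimately have "k * card (F ` verts C) = k * card (G ` edges C) + 1"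
    using count by simp
  then have "k * (card (F ` verts C) - card (G ` edges C)) = 1"
    by (simp add: diff_mult_distrib2)
  then have k1: "k = 1" and "card (F ` verts C) - card (G ` edges C) = 1"
    by simp_all
  with \<open>k * card (F ` verts C) = k * card (G ` edges C) + 1\<close>
  have count\<Gamma>: "card (G ` edges C) + 1 = card (F ` verts C)" by simp
  have injF: "inj_on F (verts C)"
  proof (rule inj_onI)
    fix x y assume xy: "x \<in> verts C" "y \<in> verts C" "F x = F y"
    have "card {z \<in> verts C. F z = F x} = 1" using fib xy(1) k1 by simp
    then obtain z where "{z \<in> verts C. F z = F x} = {z}" by (rule card_1_singletonE)
    moreover have "x \<in> {z \<in> verts C. F z = F x}" "y \<in> {z \<in> verts C. F z = F x}"
      using xy by auto
    ultimately show "x = y" by (metis singletonD)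
  qed
  have injG: "inj_on G (edges C)"
  proof (rule inj_onI)
    fix t t' assume tt: "t \<in> edges C" "t' \<in> edges C" "G t = G t'"
    have "F (src C t) = F (src C t')"
      using tt rmorph_edge(2)[OF mor] by metis
    then have "src C t = src C t'"
      using tt ends injF by (meson inj_onD)
    then have "t \<in> out_edges C (src C t)" "t' \<in> out_edges C (src C t)"
      using tt by (auto simp: out_edges_def)
    moreover have "inj_on G (out_edges C (src C t))"
      using lb ends tt by (auto simp: locally_bijective_def bij_betw_def)
    ultimately show "t = t'" using tt(3) by (meson inj_onD)
  qed
  have mor\<Gamma>: "rmorph C ?\<Gamma> F G"
    using mor V\<Gamma> E\<Gamma> by (auto simp: rmorph_def)
  have "connected_graph ?\<Gamma>"
    using V\<Gamma> root conn reach_rmorph[OF mor\<Gamma>] by (auto simp: connected_graph_def)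
  then show ?thesis
    using mor\<Gamma> injF injG V\<Gamma> E\<Gamma> finV finE count\<Gamma>
    by (simp add: riso_def contractible_graph_def bij_betw_def)
qed

lemma contractible_cayley_sub: "SubX1 N T \<Longrightarrow> contractible_graph (cayley_sub N T)"
  using cayley_sub_tree_count[of N T]
  by (auto simp: SubX1_def contractible_graph_def finite_cayley_sub_edges)

lemma cayley_sub_ends:
  "\<forall>t\<in>edges (cayley_sub N S). src (cayley_sub N S) t \<in> verts (cayley_sub N S)
                             \<and> tgt (cayley_sub N S) t \<in> verts (cayley_sub N S)"
  by (simp add: cayley_sub_edges)

lemma rmorph_cayley_sub_mono:
  assumes mor: "rmorph (cayley_sub N S) D f g" and sub: "S' \<subseteq> S"
  shows "rmorph (cayley_sub N S') D f g"
proof -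
  have E: "edges (cayley_sub N S') \<subseteq> edges (cayley_sub N S)"
    using sub by (auto simp: cayley_sub_edges)
  have "f ` S' \<subseteq> verts D" using mor sub by (auto simp: rmorph_def)
  moreover have "g e \<in> edges D \<and> src D (g e) = f (fst e)
      \<and> tgt D (g e) = f (mult_letter (fst e) (snd e, True)) \<and> lab D (g e) = snd e"
    if "e \<in> edges (cayley_sub N S')" for e
    using rmorph_edge[OF mor, of e] E that by auto
  ultimately show ?thesis unfolding rmorph_def by auto
qed

text \<open>In a Cayley graph an edge is determined by its label together with either
  endpoint (right multiplication by a letter is injective on reduced words).\<close>
lemma cayley_edge_eq:
  assumes "reduced N (fst t)" "reduced N (fst t')" "snd t = snd t'"
    and "fst t = fst t' \<or> mult_letter (fst t) (snd t, True) = mult_letter (fst t') (snd t', True)"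
  shows "t = t'"
proof -
  have "fst t = fst t'"
    using assms(4) mult_letter_inj[OF assms(1,2), of "(snd t, True)"] assms(3) by auto
  then show ?thesis using assms(3) by (simp add: prod_eq_iff)
qed

lemma cayley_sub_star_inj:
  assumes mor: "rmorph (cayley_sub N S) D f g" and red: "S \<subseteq> {w. reduced N w}"
  shows "inj_on g (out_edges (cayley_sub N S) x)" "inj_on g (in_edges (cayley_sub N S) x)"
proof -
  have "t = t'" if "t \<in> edges (cayley_sub N S)" "t' \<in> edges (cayley_sub N S)" "g t = g t'"
    and "fst t = fst t' \<or> mult_letter (fst t) (snd t, True) = mult_letter (fst t') (snd t', True)"
    for t t'
  proof (rule cayley_edge_eq[OF _ _ _ that(4)])
    show "reduced N (fst t)" "reduced N (fst t')" using that(1,2) red by (auto simp: cayley_sub_edges)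
    have "lab D (g t) = snd t" "lab D (g t') = snd t'"
      using rmorph_edge(4)[OF mor] that(1,2) by simp_all
    then show "snd t = snd t'" using that(3) by simp
  qed
  then show "inj_on g (out_edges (cayley_sub N S) x)" "inj_on g (in_edges (cayley_sub N S) x)"
    by (auto simp: out_edges_def in_edges_def intro!: inj_onI)
qed

lemma deg_out_in: "deg G v = card (out_edges G v) + card (in_edges G v)"
  by (simp add: deg_def out_edges_def in_edges_def)

text \<open>A degree-preserving morphism out of a Cayley subgraph into a finite graph is
  surjective on the edges at that vertex: it is injective there, and the degrees
  agree.\<close>
lemma degree_preserving_star:
  assumes mor: "rmorph (cayley_sub N S) D f g" and red: "S \<subseteq> {w. reduced N w}"
    and finD: "finite (edges D)" and deg: "deg D (f x) = deg (cayley_sub N S) x"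
  shows "out_edges D (f x) = g ` out_edges (cayley_sub N S) x"
    and "in_edges D (f x) = g ` in_edges (cayley_sub N S) x"
proof -
  let ?C = "cayley_sub N S"
  have sub_out: "g ` out_edges ?C x \<subseteq> out_edges D (f x)"
    and sub_in: "g ` in_edges ?C x \<subseteq> in_edges D (f x)"
    using rmorph_edge[OF mor] by (auto simp: out_edges_def in_edges_def)
  have fin: "finite (out_edges D (f x))" "finite (in_edges D (f x))"
    using finD by (auto simp: out_edges_def in_edges_def)
  have le_out: "card (g ` out_edges ?C x) \<le> card (out_edges D (f x))"
    and le_in: "card (g ` in_edges ?C x) \<le> card (in_edges D (f x))"
    using card_mono[OF fin(1) sub_out] card_mono[OF fin(2) sub_in] .
  have "card (g ` out_edges ?C x) + card (g ` in_edges ?C x)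
        = card (out_edges D (f x)) + card (in_edges D (f x))"
    using deg cayley_sub_star_inj[OF mor red] by (simp add: deg_out_in card_image)
  then have "card (g ` out_edges ?C x) = card (out_edges D (f x))"
    and "card (g ` in_edges ?C x) = card (in_edges D (f x))"
    using le_out le_in by linarith+
  then show "out_edges D (f x) = g ` out_edges ?C x" "in_edges D (f x) = g ` in_edges ?C x"
    using card_subset_eq[OF fin(1) sub_out] card_subset_eq[OF fin(2) sub_in] by simp_all
qed

text \<open>In a tree of \<open>\<R>\<^sub>r\<^sub>+\<^sub>1\<close> every vertex at distance at most r from 1 has degree
  at least 2: it is not isolated (the tree is connected with at least 2 vertices)
  and leaves only occur at distance r + 1.\<close>
lemma calR_deg:
  assumes R: "calR N (r + 1) S" and x: "x \<in> S" "length x \<le> r"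
  shows "deg (cayley_sub N S) x \<ge> 2"
proof (cases "x = []")
  case True
  then show ?thesis using R by (simp add: calR_def)
next
  case False
  let ?C = "cayley_sub N S"
  have sub: "SubX1 N S" using R by (simp add: calR_def)
  then have "(adj ?C)\<^sup>*\<^sup>* [] x" using SubX1_reach_root x(1) by (simp add: reach_def)
  then obtain z where "adj ?C z x" using False by (metis rtranclp.cases)
  then have "out_edges ?C x \<noteq> {} \<or> in_edges ?C x \<noteq> {}"
    unfolding adj_def out_edges_def in_edges_def by blast
  moreover have "finite (out_edges ?C x)" "finite (in_edges ?C x)"
    using sub finite_cayley_sub_edges by (auto simp: SubX1_def out_edges_def in_edges_def)
  ultimately have "deg ?C x \<noteq> 0" by (auto simp: deg_out_in)
  moreover have "deg ?C x \<noteq> 1" using R x by (auto simp: calR_def)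
  ultimately show ?thesis by linarith
qed

lemma occurrence_star:
  assumes occ: "based_occurrence N S D v f g" and R: "calR N (r + 1) S"
    and finD: "finite (edges D)" and x: "x \<in> S" "length x \<le> r"
  shows "out_edges D (f x) = g ` out_edges (cayley_sub N S) x"
    and "in_edges D (f x) = g ` in_edges (cayley_sub N S) x"
proof -
  have mor: "rmorph (cayley_sub N S) D f g" using occ by (simp add: based_occurrence_def)
  have red: "S \<subseteq> {w. reduced N w}" using R by (simp add: calR_def SubX1_def)
  have "deg D (f x) = deg (cayley_sub N S) x"
    using occ calR_deg[OF R x] x(1) by (simp add: based_occurrence_def)
  from degree_preserving_star[OF mor red finD this]
  show "out_edges D (f x) = g ` out_edges (cayley_sub N S) x"
    and "in_edges D (f x) = g ` in_edges (cayley_sub N S) x" .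
qed

lemma fiber_product_verts [simp]: "verts (fiber_product G H) = verts G \<times> verts H"
  by (simp add: fiber_product_def)
lemma fiber_product_edges:
  "e \<in> edges (fiber_product G H) \<longleftrightarrow>
     fst e \<in> edges G \<and> snd e \<in> edges H \<and> lab G (fst e) = lab H (snd e)"
  by (cases e) (simp add: fiber_product_def)
lemma fiber_product_src [simp]: "src (fiber_product G H) e = (src G (fst e), src H (snd e))"
  by (simp add: fiber_product_def split_beta)
lemma fiber_product_tgt [simp]: "tgt (fiber_product G H) e = (tgt G (fst e), tgt H (snd e))"
  by (simp add: fiber_product_def split_beta)
lemma fiber_product_lab [simp]: "lab (fiber_product G H) e = lab G (fst e)"
  by (simp add: fiber_product_def split_beta)

lemma rmorph_fiber_product:
  "rmorph C D1 f1 g1 \<Longrightarrow> rmorph C D2 f2 g2 \<Longrightarrow>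
   rmorph C (fiber_product D1 D2) (\<lambda>x. (f1 x, f2 x)) (\<lambda>e. (g1 e, g2 e))"
  unfolding rmorph_def by (auto simp: fiber_product_edges image_subset_iff)

text \<open>The
  endpoint map is a parameter, so one lemma serves both edge directions.\<close>
lemma fiber_product_star:
  fixes endC :: "'e \<Rightarrow> 'v" and end1 :: "'e1 \<Rightarrow> 'v1" and end2 :: "'e2 \<Rightarrow> 'v2"
  assumes star1: "{e \<in> edges D1. end1 e = y1} = g1 ` {t \<in> E1. endC t = x}"
    and star2: "{e \<in> edges D2. end2 e = y2} = g2 ` {t \<in> E2. endC t = x}"
    and lab1: "\<forall>t\<in>E1. lab D1 (g1 t) = l t" and lab2: "\<forall>t\<in>E2. lab D2 (g2 t) = l t"
    and determ: "\<forall>t\<in>E1. \<forall>t'\<in>E2. endC t = endC t' \<and> l t = l t' \<longrightarrow> t = t'"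
  shows "{e \<in> edges (fiber_product D1 D2). end1 (fst e) = y1 \<and> end2 (snd e) = y2}
         = (\<lambda>t. (g1 t, g2 t)) ` {t \<in> E1 \<inter> E2. endC t = x}"
proof
  show "{e \<in> edges (fiber_product D1 D2). end1 (fst e) = y1 \<and> end2 (snd e) = y2}
        \<subseteq> (\<lambda>t. (g1 t, g2 t)) ` {t \<in> E1 \<inter> E2. endC t = x}"
  proof
    fix e assume "e \<in> {e \<in> edges (fiber_product D1 D2). end1 (fst e) = y1 \<and> end2 (snd e) = y2}"
    then have e: "fst e \<in> {e \<in> edges D1. end1 e = y1}" "snd e \<in> {e \<in> edges D2. end2 e = y2}"
      "lab D1 (fst e) = lab D2 (snd e)"
      by (auto simp: fiber_product_edges)
    obtain t1 where t1: "t1 \<in> E1" "endC t1 = x" "fst e = g1 t1" using e(1) star1 by auto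
    obtain t2 where t2: "t2 \<in> E2" "endC t2 = x" "snd e = g2 t2" using e(2) star2 by auto
    have "t1 = t2" using determ t1 t2 e(3) lab1 lab2 by metis
    then have "e = (g1 t1, g2 t1)" using t1(3) t2(3) by (simp add: prod_eq_iff)
    then show "e \<in> (\<lambda>t. (g1 t, g2 t)) ` {t \<in> E1 \<inter> E2. endC t = x}"
      using t1 t2 \<open>t1 = t2\<close> by blast
  qed
  show "(\<lambda>t. (g1 t, g2 t)) ` {t \<in> E1 \<inter> E2. endC t = x}
        \<subseteq> {e \<in> edges (fiber_product D1 D2). end1 (fst e) = y1 \<and> end2 (snd e) = y2}"
    using star1 star2 lab1 lab2 by (fastforce simp: fiber_product_edges)
qed


lemma pair_locally_bijective:
  assumes red1: "T1 \<subseteq> {w. reduced N w}" and red2: "T2 \<subseteq> {w. reduced N w}"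
    and mor1: "rmorph (cayley_sub N T1) D1 f1 g1" and mor2: "rmorph (cayley_sub N T2) D2 f2 g2"
    and star1: "\<And>x. x \<in> T1 \<inter> T2 \<Longrightarrow> out_edges D1 (f1 x) = g1 ` out_edges (cayley_sub N T1) x
                                   \<and> in_edges D1 (f1 x) = g1 ` in_edges (cayley_sub N T1) x"
    and star2: "\<And>x. x \<in> T1 \<inter> T2 \<Longrightarrow> out_edges D2 (f2 x) = g2 ` out_edges (cayley_sub N T2) x
                                   \<and> in_edges D2 (f2 x) = g2 ` in_edges (cayley_sub N T2) x"
  shows "rmorph (cayley_sub N (T1 \<inter> T2)) (fiber_product D1 D2) (\<lambda>x. (f1 x, f2 x)) (\<lambda>e. (g1 e, g2 e))"
    and "locally_bijective (cayley_sub N (T1 \<inter> T2)) (fiber_product D1 D2)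
           (\<lambda>x. (f1 x, f2 x)) (\<lambda>e. (g1 e, g2 e))"
proof -
  let ?C = "cayley_sub N (T1 \<inter> T2)" and ?P = "fiber_product D1 D2"
    and ?F = "\<lambda>x. (f1 x, f2 x)" and ?G = "\<lambda>e. (g1 e, g2 e)"
  let ?E1 = "edges (cayley_sub N T1)" and ?E2 = "edges (cayley_sub N T2)"
  show mor: "rmorph ?C ?P ?F ?G"
    using rmorph_fiber_product[OF rmorph_cayley_sub_mono[OF mor1] rmorph_cayley_sub_mono[OF mor2]]
    by simp
  have E: "edges ?C = ?E1 \<inter> ?E2" by (auto simp: cayley_sub_edges)
  have lab1: "\<forall>t\<in>?E1. lab D1 (g1 t) = snd t" and lab2: "\<forall>t\<in>?E2. lab D2 (g2 t) = snd t"
    using rmorph_edge(4)[OF mor1] rmorph_edge(4)[OF mor2] by simp_all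
  have determ: "\<forall>t\<in>?E1. \<forall>t'\<in>?E2. endC t = endC t' \<and> snd t = snd t' \<longrightarrow> t = t'"
    if end_cases: "endC = fst \<or> endC = (\<lambda>t. mult_letter (fst t) (snd t, True))" for endC
  proof (intro ballI impI)
    fix t t' assume t: "t \<in> ?E1" "t' \<in> ?E2" and eq: "endC t = endC t' \<and> snd t = snd t'"
    show "t = t'"
    proof (rule cayley_edge_eq)
      show "reduced N (fst t)" "reduced N (fst t')"
        using t red1 red2 by (auto simp: cayley_sub_edges)
      show "snd t = snd t'" using eq ..
      show "fst t = fst t' \<or> mult_letter (fst t) (snd t, True) = mult_letter (fst t') (snd t', True)"
        using end_cases eq by auto
    qed
  qed
  have red: "T1 \<inter> T2 \<subseteq> {w. reduced N w}" using red1 by blast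
  show "locally_bijective ?C ?P ?F ?G"
    unfolding locally_bijective_def
  proof (intro ballI conjI)
    fix x assume "x \<in> verts ?C"
    then have x: "x \<in> T1 \<inter> T2" by simp
    have "{e \<in> edges D1. src D1 e = f1 x} = g1 ` {t \<in> ?E1. fst t = x}"
      and "{e \<in> edges D2. src D2 e = f2 x} = g2 ` {t \<in> ?E2. fst t = x}"
      using star1[OF x] star2[OF x] by (simp_all add: out_edges_def)
    from fiber_product_star[OF this lab1 lab2 determ]
    have "out_edges ?P (?F x) = ?G ` out_edges ?C x"
      using E by (simp add: out_edges_def)
    then show "bij_betw ?G (out_edges ?C x) (out_edges ?P (?F x))"
      using cayley_sub_star_inj(1)[OF mor red] by (simp add: bij_betw_def)
    have "{e \<in> edges D1. tgt D1 e = f1 x} = g1 ` {t \<in> ?E1. mult_letter (fst t) (snd t, True) = x}"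
      and "{e \<in> edges D2. tgt D2 e = f2 x} = g2 ` {t \<in> ?E2. mult_letter (fst t) (snd t, True) = x}"
      using star1[OF x] star2[OF x] by (simp_all add: in_edges_def)
    from fiber_product_star[OF this lab1 lab2 determ]
    have "in_edges ?P (?F x) = ?G ` in_edges ?C x"
      using E by (simp add: in_edges_def)
    then show "bij_betw ?G (in_edges ?C x) (in_edges ?P (?F x))"
      using cayley_sub_star_inj(2)[OF mor red] E by (simp add: bij_betw_def in_edges_def)
  qed
qed

theorem mainTheorem11:
  fixes N r :: nat and T T1 T2 :: "word set"
    and D1 :: "('v1, 'e1) rgraph" and D2 :: "('v2, 'e2) rgraph"
    and v1 :: 'v1 and v2 :: 'v2
    and f1 :: "word \<Rightarrow> 'v1" and g1 :: "word \<times> nat \<Rightarrow> 'e1"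
    and f2 :: "word \<Rightarrow> 'v2" and g2 :: "word \<times> nat \<Rightarrow> 'e2"
  assumes "N \<ge> 2"
    and "SubX1 N T" and "T \<subseteq> ball N r"
    and "calR N (r + 1) T1" and "calR N (r + 1) T2" and "T1 \<inter> T2 = T"
    and "core_graph N D1" and "core_graph N D2"
    and "v1 \<in> verts D1" and "v2 \<in> verts D2"
    and "based_occurrence N T1 D1 v1 f1 g1"
    and "based_occurrence N T2 D2 v2 f2 g2"
  shows "riso (cayley_sub N T) (component (fiber_product D1 D2) (v1, v2))
              (\<lambda>x. (f1 x, f2 x)) (\<lambda>e. (g1 e, g2 e))
         \<and> contractible_graph (component (fiber_product D1 D2) (v1, v2))"
proof -
  note T = assms(2) and R1 = assms(4) and R2 = assms(5) and occ1 = assms(11) and occ2 = assms(12)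
  have red1: "T1 \<subseteq> {w. reduced N w}" and red2: "T2 \<subseteq> {w. reduced N w}"
    using R1 R2 by (simp_all add: calR_def SubX1_def)
  have short: "length x \<le> r" if "x \<in> T1 \<inter> T2" for x
    using that assms(3,6) by (auto simp: ball_def)
  have fin1: "finite (edges D1)" and fin2: "finite (edges D2)"
    using assms(7,8) by (simp_all add: core_graph_def)
  have mor1: "rmorph (cayley_sub N T1) D1 f1 g1" and mor2: "rmorph (cayley_sub N T2) D2 f2 g2"
    using occ1 occ2 by (simp_all add: based_occurrence_def)
  have star1: "out_edges D1 (f1 x) = g1 ` out_edges (cayley_sub N T1) x
             \<and> in_edges D1 (f1 x) = g1 ` in_edges (cayley_sub N T1) x" if "x \<in> T1 \<inter> T2" for x
    using occurrence_star[OF occ1 R1 fin1] that short[OF that] by blast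
  have star2: "out_edges D2 (f2 x) = g2 ` out_edges (cayley_sub N T2) x
             \<and> in_edges D2 (f2 x) = g2 ` in_edges (cayley_sub N T2) x" if "x \<in> T1 \<inter> T2" for x
    using occurrence_star[OF occ2 R2 fin2] that short[OF that] by blast
  note pair = pair_locally_bijective[OF red1 red2 mor1 mor2 star1 star2, unfolded assms(6)]
  have root: "[] \<in> verts (cayley_sub N T)" using T by (simp add: SubX1_def)
  from locally_bijective_tree_iso[OF pair cayley_sub_ends contractible_cayley_sub[OF T] root]
  show ?thesis using occ1 occ2 by (simp add: based_occurrence_def)
qed

end
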